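(* Let $D$ be a BN distribution on $\{0,1\}^n$ with all conditional probabilities in $(0,1)$, whose variable order $1,\dots,n$ is a topological order of the DAG, and let $f:\{0,1\}^n\to\mathbb{R}$. Fix $0\le k\le n$ and $\alpha\in\{0,1\}^k$. For every $u\in\{0,1\}^{n-k}$, letting $Y=(X_{n-k+1},\dots,X_n)$, $$g_\alpha(u)=\mathbb{E}\big[f(uY)\,\phi_{0^{n-k}\alpha}(uY)\;\big|\;(X_1,\dots,X_{n-k})=u\big],$$ where $X\sim D$.
   Context: A Bayesian network (BN) on binary variables $X_1,\dots,X_n$ is a directed acyclic graph on $[n]$ with parent sets $\operatorname{pa}(v)$ and conditional distributions with $P(X_1,\dots,X_n)=\prod_v P(X_v\mid X_{\operatorname{pa}(v)})$. Let $\mu_{v,x_{\operatorname{pa}(v)}}=P(X_v=1\mid X_{\operatorname{pa}(v)}=x_{\operatorname{pa}(v)})$, $\sigma_{v,x_{\operatorname{pa}(v)}}=\sqrt{\mu_{v,x_{\operatorname{pa}(v)}}(1-\mu_{v,x_{\operatorname{pa}(v)}})}$, $\phi_v(x)=(x_v-\mu_{v,x_{\operatorname{pa}(v)}})/\sigma_{v,x_{\operatorname{pa}(v)}}$, $\phi_S=\prod_{v\in S}\phi_v$, and $\hat f_S=\mathbb{E}_D[f(X)\phi_S(X)]$. Sets $S\subseteq[n]$ are identified with strings $\gamma\in\{0,1\}^n$ via $\gamma_i=1\iff i\in S$, and we write $\phi_\gamma,\hat f_\gamma$ accordingly. For $\beta\in\{0,1\}^{n-k}$ and $\alpha\in\{0,1\}^k$,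 $\beta\alpha\in\{0,1\}^n$ is their concatenation ($\beta$ occupies coordinates $1,\dots,n-k$); $0^m$ is the all-zero string of length $m$; for $u\in\{0,1\}^{n-k}$ and $y\in\{0,1\}^k$, $uy\in\{0,1\}^n$ is the concatenated input. Define $g_\alpha(u)=\sum_{\beta\in\{0,1\}^{n-k}}\hat f_{\beta\alpha}\,\phi_{\beta0^k}(u0^k)$ for $u\in\{0,1\}^{n-k}$ (note $\phi_{\beta 0^k}(x)$ depends only on $x_1,\dots,x_{n-k}$ since the order is topological). *)

theory Defs
  imports Complex_Main
begin

text \<open>Points of {0,1}^n are boolean lists of length n; variable i (1-based in the
paper) is list position i-1. A Bayesian network is given by parent sets
pa v and conditional probabilities mu v x = P(X_v = 1 | X_pa(v) = x_pa(v)),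
written as a function of the whole assignment x that depends only on the
coordinates in pa v.\<close>

definition bn_ok :: "nat \<Rightarrow> (nat \<Rightarrow> nat set) \<Rightarrow> (nat \<Rightarrow> bool list \<Rightarrow> real) \<Rightarrow> bool" where
  "bn_ok n pa mu \<longleftrightarrow>
     (\<forall>v<n. pa v \<subseteq> {..<v}) \<and>
     (\<forall>v<n. \<forall>x y. length x = n \<longrightarrow> length y = n \<longrightarrow> (\<forall>j\<in>pa v. x ! j = y ! j)
                 \<longrightarrow> mu v x = mu v y) \<and>
     (\<forall>v<n. \<forall>x. length x = n \<longrightarrow> 0 < mu v x \<and> mu v x < 1)"

definition bn_prob :: "nat \<Rightarrow> (nat \<Rightarrow> bool list \<Rightarrow> real) \<Rightarrow> bool list \<Rightarrow> real" where
  "bn_prob n mu x = (\<Prod>v<n. if x ! v then mu v x else 1 - mu v x)"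

definition bn_expect :: "nat \<Rightarrow> (nat \<Rightarrow> bool list \<Rightarrow> real) \<Rightarrow> (bool list \<Rightarrow> real) \<Rightarrow> real" where
  "bn_expect n mu h = (\<Sum>x\<in>{x. length x = n}. bn_prob n mu x * h x)"

definition phi :: "(nat \<Rightarrow> bool list \<Rightarrow> real) \<Rightarrow> nat \<Rightarrow> bool list \<Rightarrow> real" where
  "phi mu v x = ((if x ! v then 1 else 0) - mu v x) / sqrt (mu v x * (1 - mu v x))"

definition phiS :: "(nat \<Rightarrow> bool list \<Rightarrow> real) \<Rightarrow> bool list \<Rightarrow> bool list \<Rightarrow> real" where
  "phiS mu \<gamma> x = (\<Prod>v\<in>{v. v < length \<gamma> \<and> \<gamma> ! v}. phi mu v x)"

definition fhat :: "nat \<Rightarrow> (nat \<Rightarrow> bool list \<Rightarrow> real) \<Rightarrow> (bool list \<Rightarrow> real) \<Rightarrow> bool list \<Rightarrow> real" where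
  "fhat n mu f \<gamma> = bn_expect n mu (\<lambda>x. f x * phiS mu \<gamma> x)"

definition g_alpha :: "nat \<Rightarrow> nat \<Rightarrow> (nat \<Rightarrow> bool list \<Rightarrow> real) \<Rightarrow> (bool list \<Rightarrow> real)
    \<Rightarrow> bool list \<Rightarrow> bool list \<Rightarrow> real" where
  "g_alpha n k mu f \<alpha> u =
     (\<Sum>\<beta>\<in>{\<beta>. length \<beta> = n - k}.
        fhat n mu f (\<beta> @ \<alpha>) * phiS mu (\<beta> @ replicate k False) (u @ replicate k False))"

text \<open>Conditional expectation E[h(X) | (X_1..X_{n-k}) = u] under the BN distribution,
  by the elementary formula (the conditioning event has positive probability).\<close>
definition cond_expect_prefix :: "nat \<Rightarrow> (nat \<Rightarrow> bool list \<Rightarrow> real) \<Rightarrow> (bool list \<Rightarrow> real)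
    \<Rightarrow> bool list \<Rightarrow> real" where
  "cond_expect_prefix n mu h u =
     (\<Sum>x\<in>{x. length x = n \<and> take (length u) x = u}. bn_prob n mu x * h x)
     / (\<Sum>x\<in>{x. length x = n \<and> take (length u) x = u}. bn_prob n mu x)"

end

theory Submission imports Defs begin

text \<open>Write m = n - k. Since phi_{beta alpha} = phi_{beta 0} phi_{0 alpha}, exchanging the two sums
turns g_alpha(u) into E[f phi_{0 alpha}(X) K(X, u 0^k)] with the kernel
K(x, y) = sum_beta phi_{beta 0}(x) phi_{beta 0}(y) = prod_{v<m} (1 + phi_v(x) phi_v(y)).
Because the order is topological, phi_v(x) and phi_v(y) use the same mu_v as soon as x and y agree
before v, and then 1 + phi_v(x) phi_v(y) is 1 / P(X_v = y_v | parents) if x_v = y_v and 0 otherwise.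
So K(x, y) is the indicator that x and y share their first m coordinates, divided by the probability
of that prefix, which turns the expectation into the conditional one.\<close>

definition bn_cond_prob :: "(nat \<Rightarrow> bool list \<Rightarrow> real) \<Rightarrow> nat \<Rightarrow> bool list \<Rightarrow> real" where
  "bn_cond_prob mu v x = (if x ! v then mu v x else 1 - mu v x)"

definition ones :: "bool list \<Rightarrow> nat set" where
  "ones \<gamma> = {v. v < length \<gamma> \<and> \<gamma> ! v}"

lemma phiS_eq_prod_ones: "phiS mu \<gamma> x = (\<Prod>v\<in>ones \<gamma>. phi mu v x)"
  unfolding phiS_def ones_def ..

lemma ones_append: "ones (\<beta> @ \<gamma>) = ones \<beta> \<union> (+) (length \<beta>) ` ones \<gamma>"
proof (rule set_eqI)
  fix v
  show "v \<in> ones (\<beta> @ \<gamma>) \<longleftrightarrow> v \<in> ones \<beta> \<union> (+) (length \<beta>) ` ones \<gamma>"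
    unfolding ones_def
    by (cases "v < length \<beta>") (auto simp: nth_append image_iff intro: exI[of _ "v - length \<beta>"])
qed

lemma ones_replicate_False [simp]: "ones (replicate r False) = {}"
  unfolding ones_def by simp

lemma ones_subset: "ones \<gamma> \<subseteq> {..<length \<gamma>}"
  unfolding ones_def by auto

lemma finite_ones [simp]: "finite (ones \<gamma>)"
  using ones_subset finite_subset by blast

lemma bij_betw_ones: "bij_betw ones {\<beta>. length \<beta> = m} (Pow {..<m})"
proof (rule bij_betw_byWitness[where f' = "\<lambda>X. map (\<lambda>v. v \<in> X) [0..<m]"])
  show "\<forall>\<beta>\<in>{\<beta>. length \<beta> = m}. map (\<lambda>v. v \<in> ones \<beta>) [0..<m] = \<beta>"
    by (auto simp: ones_def list_eq_iff_nth_eq)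
  show "\<forall>X\<in>Pow {..<m}. ones (map (\<lambda>v. v \<in> X) [0..<m]) = X"
    by (auto simp: ones_def)
qed (use ones_subset in auto)

lemma sum_bool_lists_prod_ones:
  fixes a :: "nat \<Rightarrow> 'a::comm_semiring_1"
  shows "(\<Sum>\<beta>\<in>{\<beta>. length \<beta> = m}. \<Prod>v\<in>ones \<beta>. a v) = (\<Prod>v<m. 1 + a v)"
proof -
  have "(\<Prod>v<m. 1 + a v) = (\<Sum>X\<in>Pow {..<m}. prod a X)"
    using prod_add[of "{..<m}" a "\<lambda>_. 1"] by (simp add: add.commute)
  also have "\<dots> = (\<Sum>\<beta>\<in>{\<beta>. length \<beta> = m}. prod a (ones \<beta>))"
    by (rule sum.reindex_bij_betw[OF bij_betw_ones, symmetric])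
  finally show ?thesis ..
qed

lemma phiS_append_split:
  assumes "length \<beta> = m"
  shows "phiS mu (\<beta> @ \<alpha>) x
       = phiS mu (\<beta> @ replicate (length \<alpha>) False) x * phiS mu (replicate m False @ \<alpha>) x"
proof -
  have "ones \<beta> \<inter> (+) m ` ones \<alpha> = {}"
    using ones_subset[of \<beta>] assms by auto
  then show ?thesis
    unfolding phiS_eq_prod_ones ones_append assms by (simp add: prod.union_disjoint)
qed

lemma bn_ok_mu_bounds:
  assumes "bn_ok n pa mu" "v < n" "length x = n"
  shows "0 < mu v x" "mu v x < 1"
  using assms unfolding bn_ok_def by blast+

lemma bn_ok_mu_eq_if_prefix_eq:
  assumes "bn_ok n pa mu" "v < n" "length x = n" "length y = n" "\<forall>j<v. x ! j = y ! j"
  shows "mu v x = mu v y"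
proof -
  have "pa v \<subseteq> {..<v}" using assms(1,2) unfolding bn_ok_def by blast
  then have "\<forall>j\<in>pa v. x ! j = y ! j" using assms(5) by auto
  then show ?thesis using assms(1-4) unfolding bn_ok_def by blast
qed

lemma bn_cond_prob_eq_if_prefix_eq:
  assumes "bn_ok n pa mu" "v < n" "length x = n" "length y = n" "\<forall>j\<le>v. x ! j = y ! j"
  shows "bn_cond_prob mu v x = bn_cond_prob mu v y"
  using bn_ok_mu_eq_if_prefix_eq[OF assms(1-4)] assms(5) unfolding bn_cond_prob_def by simp

lemma prod_bn_cond_prob_eq_if_take_eq:
  assumes "bn_ok n pa mu" "m \<le> n" "length x = n" "length y = n" "take m x = take m y"
  shows "(\<Prod>v<m. bn_cond_prob mu v x) = (\<Prod>v<m. bn_cond_prob mu v y)"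
proof (rule prod.cong[OF refl])
  fix v assume "v \<in> {..<m}"
  moreover have "x ! j = y ! j" if "j < m" for j
    using assms(5) that by (metis nth_take)
  ultimately show "bn_cond_prob mu v x = bn_cond_prob mu v y"
    using assms by (intro bn_cond_prob_eq_if_prefix_eq) auto
qed

lemma bn_cond_prob_update_True_plus_False:
  assumes "bn_ok n pa mu" "v < n" "length y = n"
  shows "bn_cond_prob mu v (y[v := True]) + bn_cond_prob mu v (y[v := False]) = 1"
proof -
  have "mu v (y[v := True]) = mu v (y[v := False])"
    using assms by (intro bn_ok_mu_eq_if_prefix_eq) auto
  then show ?thesis unfolding bn_cond_prob_def using assms by simp
qed

lemma sum_bn_prob_take_eq:
  assumes bn: "bn_ok n pa mu" and "m \<le> n" and ly: "length y = n"
  shows "(\<Sum>x\<in>{x. length x = n \<and> take m x = take m y}. bn_prob n mu x) = (\<Prod>v<m. bn_cond_prob mu v y)"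
  using assms(2) ly
proof (induction m arbitrary: y rule: inc_induct)
  case base
  then have "{x. length x = n \<and> take n x = take n y} = {y}" by auto
  then show ?case unfolding bn_prob_def bn_cond_prob_def by (simp only: sum.insert_if) simp
next
  case (step m)
  let ?S = "\<lambda>m y. {x. length x = n \<and> take m x = take m y}"
  let ?P = "\<lambda>m y. \<Prod>v<m. bn_cond_prob mu v y"
  have take_upd: "take (Suc m) (y[m := b]) = take m y @ [b]" for b
    using step by (simp add: take_Suc_conv_app_nth)
  have split: "?S m y = ?S (Suc m) (y[m := True]) \<union> ?S (Suc m) (y[m := False])"
  proof (rule set_eqI)
    fix x
    show "x \<in> ?S m y \<longleftrightarrow> x \<in> ?S (Suc m) (y[m := True]) \<union> ?S (Suc m) (y[m := False])"
      unfolding take_upd using step by (cases "x ! m") (auto simp: take_Suc_conv_app_nth)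
  qed
  have disj: "?S (Suc m) (y[m := True]) \<inter> ?S (Suc m) (y[m := False]) = {}"
    unfolding take_upd by auto
  have sum_upd: "sum (bn_prob n mu) (?S (Suc m) (y[m := b])) = ?P m y * bn_cond_prob mu m (y[m := b])" for b
  proof -
    have "?P m (y[m := b]) = ?P m y"
      using step by (intro prod_bn_cond_prob_eq_if_take_eq[OF bn]) auto
    then show ?thesis using step.IH[of "y[m := b]"] step.prems by simp
  qed
  have "sum (bn_prob n mu) (?S m y)
      = sum (bn_prob n mu) (?S (Suc m) (y[m := True])) + sum (bn_prob n mu) (?S (Suc m) (y[m := False]))"
    unfolding split
    by (rule sum.union_disjoint[OF _ _ disj]) (auto intro: finite_subset[OF _ finite_list_length])
  also have "\<dots> = ?P m y * (bn_cond_prob mu m (y[m := True]) + bn_cond_prob mu m (y[m := False]))"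
    by (simp only: sum_upd distrib_left)
  also have "\<dots> = ?P m y"
    using bn_cond_prob_update_True_plus_False[OF bn] step by simp
  finally show ?case .
qed

lemma one_plus_phi_mult_phi:
  assumes bn: "bn_ok n pa mu" and "v < n" "length x = n" "length y = n" "\<forall>j<v. x ! j = y ! j"
  shows "1 + phi mu v x * phi mu v y = (if x ! v = y ! v then 1 / bn_cond_prob mu v y else 0)"
proof -
  define t where "t = mu v y"
  have mu_x: "mu v x = t" unfolding t_def using bn_ok_mu_eq_if_prefix_eq[OF assms] .
  have t: "0 < t" "t < 1" unfolding t_def using bn_ok_mu_bounds[OF bn] assms by auto
  have "sqrt (t * (1 - t)) * sqrt (t * (1 - t)) = t * (1 - t)"
    using t by simp
  then have phi_mult: "phi mu v x * phi mu v y
      = ((if x ! v then 1 else 0) - t) * ((if y ! v then 1 else 0) - t) / (t * (1 - t))"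
    unfolding phi_def mu_x t_def[symmetric] by simp
  show ?thesis unfolding bn_cond_prob_def t_def[symmetric] phi_mult using t
    by (cases "x ! v"; cases "y ! v") (auto simp: field_simps)
qed

lemma sum_phiS_mult_phiS:
  assumes bn: "bn_ok n pa mu" and "m \<le> n" "length x = n" "length y = n"
  shows "(\<Sum>\<beta>\<in>{\<beta>. length \<beta> = m}. phiS mu (\<beta> @ replicate r False) x * phiS mu (\<beta> @ replicate r False) y)
       = (if take m x = take m y then 1 / (\<Prod>v<m. bn_cond_prob mu v y) else 0)"
proof -
  let ?a = "\<lambda>v. phi mu v x * phi mu v y"
  have "(\<Sum>\<beta>\<in>{\<beta>. length \<beta> = m}. phiS mu (\<beta> @ replicate r False) x * phiS mu (\<beta> @ replicate r False) y)
      = (\<Sum>\<beta>\<in>{\<beta>. length \<beta> = m}. \<Prod>v\<in>ones \<beta>. ?a v)"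
    unfolding phiS_eq_prod_ones ones_append by (simp add: prod.distrib)
  also have "\<dots> = (\<Prod>v<m. 1 + ?a v)"
    by (rule sum_bool_lists_prod_ones)
  also have "\<dots> = (if take m x = take m y then 1 / (\<Prod>v<m. bn_cond_prob mu v y) else 0)"
  proof (cases "take m x = take m y")
    case True
    have "x ! j = y ! j" if "j < m" for j
      using True that by (metis nth_take)
    then have "1 + ?a v = 1 / bn_cond_prob mu v y" if "v < m" for v
      using that assms by (subst one_plus_phi_mult_phi[OF bn]) auto
    then show ?thesis
      using True by (simp add: prod_dividef)
  next
    case False
    then have "\<exists>j<m. x ! j \<noteq> y ! j"
      using assms by (auto simp: list_eq_iff_nth_eq)
    then obtain v where v: "v < m" "x ! v \<noteq> y ! v" and agree: "\<forall>j<v. x ! j = y ! j"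
      using exists_least_iff[of "\<lambda>j. j < m \<and> x ! j \<noteq> y ! j"] by (metis less_trans)
    then have "1 + ?a v = 0"
      using assms by (subst one_plus_phi_mult_phi[OF bn]) auto
    then show ?thesis
      using False v(1) by auto
  qed
  finally show ?thesis .
qed

lemma sum_bn_expect_phiS_eq_cond_expect_prefix:
  assumes bn: "bn_ok n pa mu" and mn: "m \<le> n" and ly: "length y = n"
  shows "(\<Sum>\<beta>\<in>{\<beta>. length \<beta> = m}.
            bn_expect n mu (\<lambda>x. h x * phiS mu (\<beta> @ replicate r False) x) * phiS mu (\<beta> @ replicate r False) y)
       = cond_expect_prefix n mu h (take m y)"
proof -
  let ?L = "{x. length x = n}"
  let ?S = "{x. length x = n \<and> take m x = take m y}"
  let ?P = "\<Prod>v<m. bn_cond_prob mu v y"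
  let ?\<Phi> = "\<lambda>\<beta> x. phiS mu (\<beta> @ replicate r False) x"
  have "(\<Sum>\<beta>\<in>{\<beta>. length \<beta> = m}. bn_expect n mu (\<lambda>x. h x * ?\<Phi> \<beta> x) * ?\<Phi> \<beta> y)
      = (\<Sum>x\<in>?L. bn_prob n mu x * h x * (\<Sum>\<beta>\<in>{\<beta>. length \<beta> = m}. ?\<Phi> \<beta> x * ?\<Phi> \<beta> y))"
    unfolding bn_expect_def sum_distrib_right sum_distrib_left
    by (subst sum.swap) (simp add: mult_ac)
  also have "\<dots> = (\<Sum>x\<in>?L. if take m x = take m y then bn_prob n mu x * h x / ?P else 0)"
    using sum_phiS_mult_phiS[OF bn mn _ ly] by (intro sum.cong) auto
  also have "\<dots> = (\<Sum>x\<in>?S. bn_prob n mu x * h x) / ?P"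
    by (simp add: sum.inter_filter[OF finite_list_length, symmetric] sum_divide_distrib)
  also have "?P = (\<Sum>x\<in>?S. bn_prob n mu x)"
    using sum_bn_prob_take_eq[OF bn mn ly] ..
  finally show ?thesis
    unfolding cond_expect_prefix_def using mn ly by (simp add: min_absorb1)
qed

theorem mainTheorem2:
  fixes n k :: nat and pa :: "nat \<Rightarrow> nat set" and mu :: "nat \<Rightarrow> bool list \<Rightarrow> real"
    and f :: "bool list \<Rightarrow> real" and \<alpha> u :: "bool list"
  assumes "bn_ok n pa mu" and "k \<le> n" and "length \<alpha> = k" and "length u = n - k"
  shows "g_alpha n k mu f \<alpha> u =
         cond_expect_prefix n mu (\<lambda>x. f x * phiS mu (replicate (n - k) False @ \<alpha>) x) u"
proof -
  let ?h = "\<lambda>x. f x * phiS mu (replicate (n - k) False @ \<alpha>) x"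
  let ?y = "u @ replicate k False"
  have "fhat n mu f (\<beta> @ \<alpha>) = bn_expect n mu (\<lambda>x. ?h x * phiS mu (\<beta> @ replicate k False) x)"
    if "length \<beta> = n - k" for \<beta>
    unfolding fhat_def phiS_append_split[OF that, where \<alpha> = \<alpha>] assms(3) by (simp add: mult_ac)
  then have "g_alpha n k mu f \<alpha> u
      = (\<Sum>\<beta>\<in>{\<beta>. length \<beta> = n - k}.
           bn_expect n mu (\<lambda>x. ?h x * phiS mu (\<beta> @ replicate k False) x) * phiS mu (\<beta> @ replicate k False) ?y)"
    unfolding g_alpha_def by (intro sum.cong) auto
  also have "\<dots> = cond_expect_prefix n mu ?h (take (n - k) ?y)"
    using assms by (intro sum_bn_expect_phiS_eq_cond_expect_prefix) auto
  finally show ?thesis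
    using assms(4) by simp
qed

end
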